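(* Let $e\geqslant 1$ be an integer and $b\geqslant 2$ an even integer. Suppose that for every integer $a$ there exists an $(e,b)$-happy number $h$ with $h\equiv a\pmod{(b-1)^e}$. Then for every positive integer $x$ and every $N$, there exists an $(e,b)$-happy number $l>N$ such that $l+x$ is also $(e,b)$-happy.
   Context: For a positive integer $n=\sum_{j=0}^k a_j b^j$ with $0\leqslant a_j<b$, $T_{e,b}(n)=\sum_{j=0}^k a_j^e$; $T_{e,b}^r$ is the $r$-th iterate, $T_{e,b}^0(n)=n$. A positive integer $n$ is $(e,b)$-happy if $T_{e,b}^r(n)=1$ for some $r\geqslant 0$. *)

theory Defs
  imports Main
begin

fun T :: "nat \<Rightarrow> nat \<Rightarrow> nat \<Rightarrow> nat" where
  "T e b n = (if b < 2 \<or> n = 0 then 0 else (n mod b) ^ e + T e b (n div b))"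

definition happy :: "nat \<Rightarrow> nat \<Rightarrow> nat \<Rightarrow> bool" where
  "happy e b n \<longleftrightarrow> n > 0 \<and> (\<exists>r. (T e b ^^ r) n = 1)"

end

theory Submission
  imports Defs "HOL-Number_Theory.Number_Theory"
begin

text \<open>
  Write \<open>q = (b - 1)^e\<close> and \<open>t = T(x - 1)\<close>. Every power of \<open>b\<close> is happy, so we aim at
  \<open>T(l + x) = b^(t+1)\<close>. Put \<open>k = b^(t+1) - (t + 1)\<close> and pick a large happy \<open>H = k + m q\<close>.
  If \<open>A\<close> is the number written with \<open>k\<close> ones, then \<open>l = A b^(m+1) + (b^m - 1)\<close> has the digits
  of \<open>A\<close> followed by a zero and \<open>m\<close> digits \<open>b - 1\<close>, so \<open>T(l) = k + m q = H\<close>; adding \<open>x\<close> turns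
  the tail into \<open>b^m + (x - 1)\<close>, so \<open>T(l + x) = k + 1 + t = b^(t+1)\<close>.

  Large happy numbers in a residue class mod \<open>q\<close> come from any happy \<open>h\<close> in that class: the
  number with \<open>h\<close> digits one at positions divisible by \<open>\<phi>(q)\<close> is mapped to \<open>h\<close> by \<open>T\<close> and,
  by Euler's theorem, is congruent to \<open>h\<close> mod \<open>q\<close>.
\<close>

declare T.simps [simp del]

lemma T_0 [simp]: "T e b 0 = 0"
  by (simp add: T.simps)

text \<open>Valid also for \<open>n = 0\<close> because \<open>0 ^ e = 0\<close>; this is what makes zero digits contribute nothing.\<close>

lemma T_unfold:
  assumes "2 \<le> b" "0 < e"
  shows "T e b n = (n mod b) ^ e + T e b (n div b)"
  using assms by (cases "n = 0") (simp_all add: T.simps)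

lemma T_digit: "2 \<le> b \<Longrightarrow> 0 < d \<Longrightarrow> d < b \<Longrightarrow> T e b d = d ^ e"
  by (simp add: T.simps)

lemma T_Suc_0 [simp]: "2 \<le> b \<Longrightarrow> T e b (Suc 0) = 1"
  by (simp add: T_digit)

lemma T_append_digits:
  assumes "2 \<le> b" "0 < e" "c < b ^ K"
  shows "T e b (a * b ^ K + c) = T e b a + T e b c"
  using assms(3)
proof (induction K arbitrary: a c)
  case 0
  then show ?case by simp
next
  case (Suc K)
  have mod: "(a * b ^ Suc K + c) mod b = c mod b"
    by (simp add: mod_add_left_eq [symmetric])
  have div: "(a * b ^ Suc K + c) div b = a * b ^ K + c div b"
    using assms(1) by (simp add: div_add1_eq mult.commute mult.left_commute)
  have "c div b < b ^ K"
    using Suc.prems assms(1) by (simp add: div_less_iff_less_mult mult.commute)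
  then have "T e b (a * b ^ Suc K + c) = (c mod b) ^ e + T e b a + T e b (c div b)"
    using Suc.IH T_unfold [OF assms(1,2), of "a * b ^ Suc K + c"] mod div by simp
  also have "\<dots> = T e b a + T e b c"
    using T_unfold [OF assms(1,2), of c] by simp
  finally show ?case .
qed

lemma T_mult_power: "2 \<le> b \<Longrightarrow> 0 < e \<Longrightarrow> T e b (n * b ^ K) = T e b n"
  using T_append_digits [of b e 0 K n] by simp

lemma T_power: "2 \<le> b \<Longrightarrow> 0 < e \<Longrightarrow> T e b (b ^ j) = 1"
  using T_mult_power [of b e 1 j] by simp

lemma T_power_minus_1:
  assumes "2 \<le> b" "0 < e"
  shows "T e b (b ^ m - 1) = m * (b - 1) ^ e"
proof (induction m)
  case 0
  then show ?case by simp
next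
  case (Suc m)
  have "b ^ Suc m - 1 = (b ^ m - 1) * b ^ 1 + (b - 1)"
    using assms(1) by (simp add: algebra_simps)
  then have "T e b (b ^ Suc m - 1) = T e b (b ^ m - 1) + T e b (b - 1)"
    using T_append_digits [OF assms, of "b - 1" 1 "b ^ m - 1"] assms(1) by simp
  then show ?case
    using Suc.IH T_digit [OF assms(1), of "b - 1" e] assms(1) by simp
qed

definition repunit :: "nat \<Rightarrow> nat \<Rightarrow> nat \<Rightarrow> nat" where
  "repunit b P k = (\<Sum>i<k. b ^ (P * i))"

lemma repunit_Suc: "repunit b P (Suc k) = repunit b P k * b ^ P + 1"
  unfolding repunit_def
  by (simp only: sum.lessThan_Suc_shift)
     (simp add: sum_distrib_left sum_distrib_right power_add algebra_simps flip: power_mult)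

lemma repunit_pos: "0 < k \<Longrightarrow> 0 < repunit b P k"
  by (cases k) (simp_all add: repunit_Suc)

lemma T_repunit:
  assumes "2 \<le> b" "0 < e" "0 < P"
  shows "T e b (repunit b P k) = k"
proof (induction k)
  case 0
  then show ?case by (simp add: repunit_def)
next
  case (Suc k)
  have "1 < b ^ P"
    using assms by (intro one_less_power) auto
  then show ?case
    using Suc.IH T_append_digits [OF assms(1,2), of 1 P "repunit b P k"] assms(1)
    by (simp add: repunit_Suc)
qed

lemma repunit_cong:
  assumes "[b ^ P = 1] (mod q)"
  shows "[repunit b P k = k] (mod q)"
proof -
  have "[(\<Sum>i<k. (b ^ P) ^ i) = (\<Sum>i<k. 1 ^ i)] (mod q)"
    by (intro cong_sum cong_pow assms)
  then show ?thesis
    by (simp add: repunit_def power_mult)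
qed

lemma less_power_self: "2 \<le> b \<Longrightarrow> n < b ^ n"
  by (rule order_less_le_trans [OF less_exp power_mono]) simp_all

lemma happy_if_happy_T: "0 < n \<Longrightarrow> happy e b (T e b n) \<Longrightarrow> happy e b n"
  unfolding happy_def by (metis funpow_Suc_right o_apply)

lemma happy_power: "2 \<le> b \<Longrightarrow> 0 < e \<Longrightarrow> happy e b (b ^ j)"
  using happy_if_happy_T [of "b ^ j" e b] T_power [of b e j]
  by (simp add: happy_def exI [of _ 0])

lemma happy_cong_ge:
  assumes b: "2 \<le> b" and e: "0 < e" and "coprime b q" and h: "happy e b h"
  shows "\<exists>H \<ge> B. happy e b H \<and> [H = h] (mod q)"
proof -
  define P where "P = totient q"
  define H where "H = repunit b P h * b ^ (P * B)"
  have "q \<noteq> 0"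
    using \<open>coprime b q\<close> b by (cases "q = 0") auto
  then have "0 < P"
    by (simp add: P_def)
  have "0 < h"
    using h by (simp add: happy_def)
  then have "0 < H"
    using b by (simp add: H_def repunit_pos)
  have "T e b H = h"
    using T_mult_power [OF b e] T_repunit [OF b e \<open>0 < P\<close>] by (simp add: H_def)
  then have "happy e b H"
    using happy_if_happy_T [OF \<open>0 < H\<close>] h by simp
  moreover have "B \<le> H"
  proof -
    have "B < b ^ B"
      using b by (rule less_power_self)
    also have "\<dots> \<le> b ^ (P * B)"
      using b \<open>0 < P\<close> by (intro power_increasing) auto
    also have "\<dots> \<le> H"
      using repunit_pos [OF \<open>0 < h\<close>, of b P] by (simp add: H_def)
    finally show ?thesis by simp
  qed
  moreover have "[H = h * 1 ^ B] (mod q)"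
  proof -
    have "[b ^ P = 1] (mod q)"
      unfolding P_def using \<open>coprime b q\<close> by (rule euler_theorem)
    then show ?thesis
      unfolding H_def power_mult by (intro cong_mult cong_pow repunit_cong)
  qed
  ultimately show ?thesis by auto
qed

lemma T_repunit_tail_pair:
  fixes k :: nat
  assumes b: "2 \<le> b" and e: "0 < e" and "0 < x" "x \<le> b ^ m"
  defines "l \<equiv> repunit b 1 k * b ^ Suc m + (b ^ m - 1)"
  shows "T e b l = k + m * (b - 1) ^ e"
    and "T e b (l + x) = k + 1 + T e b (x - 1)"
proof -
  have "0 < b ^ m" "2 * b ^ m \<le> b ^ Suc m"
    using b by simp_all
  then have "b ^ m - 1 < b ^ Suc m" "b ^ m + (x - 1) < b ^ Suc m"
    using \<open>x \<le> b ^ m\<close> by linarith+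
  have "T e b l = T e b (repunit b 1 k) + T e b (b ^ m - 1)"
    unfolding l_def by (rule T_append_digits [OF b e]) fact
  then show "T e b l = k + m * (b - 1) ^ e"
    using T_repunit [OF b e] T_power_minus_1 [OF b e] by simp
  have "x - 1 < b ^ m"
    using \<open>x \<le> b ^ m\<close> \<open>0 < x\<close> by linarith
  then have "T e b (b ^ m + (x - 1)) = 1 + T e b (x - 1)"
    using T_append_digits [OF b e, of "x - 1" m 1] b by simp
  moreover have "l + x = repunit b 1 k * b ^ Suc m + (b ^ m + (x - 1))"
    unfolding l_def using \<open>0 < x\<close> \<open>0 < b ^ m\<close> by linarith
  then have "T e b (l + x) = T e b (repunit b 1 k) + T e b (b ^ m + (x - 1))"
    using T_append_digits [OF b e \<open>b ^ m + (x - 1) < b ^ Suc m\<close>] by (simp only:)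
  ultimately show "T e b (l + x) = k + 1 + T e b (x - 1)"
    using T_repunit [OF b e] by simp
qed

lemma happy_add_mult_ge:
  assumes "2 \<le> b" "0 < e" "coprime b q" "happy e b h" "[h = k] (mod q)"
  shows "\<exists>m \<ge> M. happy e b (k + m * q)"
proof -
  have "0 < q"
    using assms(1,3) by (cases "q = 0") auto
  obtain H where H: "k + q * M \<le> H" "happy e b H" "[H = h] (mod q)"
    using happy_cong_ge [OF assms(1-4)] by blast
  have "k \<le> H" "[H = k] (mod q)"
    using H(1) cong_trans [OF H(3) assms(5)] by simp_all
  then obtain m where "H = m * q + k"
    using cong_le_nat by blast
  with H(1,2) have "M \<le> m" "happy e b (k + m * q)"
    using \<open>0 < q\<close> by (simp_all add: add.commute mult.commute)
  then show ?thesis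
    by blast
qed

lemma coprime_power_pred: "0 < b \<Longrightarrow> coprime b ((b - 1) ^ e)"
  for b :: nat
  using coprime_Suc_left_nat [of "b - 1"] by simp

lemma happy_pair_ge:
  assumes b: "2 \<le> b" and e: "0 < e" and "0 < x"
    and classes: "\<And>c. \<exists>h. happy e b h \<and> [h = c] (mod (b - 1) ^ e)"
  shows "\<exists>l > N. happy e b l \<and> happy e b (l + x)"
proof -
  define t where "t = T e b (x - 1)"
  define k where "k = b ^ Suc t - Suc t"
  have "coprime b ((b - 1) ^ e)"
    using b coprime_power_pred [of b e] by simp
  moreover obtain h where "happy e b h" "[h = k] (mod (b - 1) ^ e)"
    using classes by blast
  ultimately obtain m where "N + x \<le> m" and happy_H: "happy e b (k + m * (b - 1) ^ e)"
    using happy_add_mult_ge [OF b e] by blast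
  then have "N + x < b ^ m"
    using less_power_self [OF b, of m] by simp
  define l where "l = repunit b 1 k * b ^ Suc m + (b ^ m - 1)"
  have "k + 1 + t = b ^ Suc t"
    using less_power_self [OF b, of "Suc t"] by (simp add: k_def)
  then have "T e b l = k + m * (b - 1) ^ e" "T e b (l + x) = b ^ Suc t"
    using T_repunit_tail_pair [OF b e \<open>0 < x\<close>, of m k] \<open>N + x < b ^ m\<close>
    by (simp_all add: l_def t_def)
  moreover have "N < l"
    using \<open>N + x < b ^ m\<close> \<open>0 < x\<close> by (simp add: l_def)
  ultimately have "happy e b l" "happy e b (l + x)"
    using happy_if_happy_T [of l e b] happy_if_happy_T [of "l + x" e b] happy_H
      happy_power [OF b e, of "Suc t"] by simp_all
  with \<open>N < l\<close> show ?thesis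
    by blast
qed

theorem lemma2p3:
  fixes e b :: nat
  assumes "e \<ge> 1" and "b \<ge> 2" and "even b"
    and "\<forall>a::int. \<exists>h. happy e b h \<and> int h mod ((int b - 1) ^ e) = a mod ((int b - 1) ^ e)"
  shows "\<forall>(x::nat) > 0. \<forall>N::nat. \<exists>l. l > N \<and> happy e b l \<and> happy e b (l + x)"
proof (intro allI impI)
  fix x N :: nat
  assume "0 < x"
  have "\<exists>h. happy e b h \<and> [h = c] (mod (b - 1) ^ e)" for c
  proof -
    have q: "(int b - 1) ^ e = int ((b - 1) ^ e)"
      using assms(2) by simp
    obtain h where h: "happy e b h" "int h mod (int b - 1) ^ e = int c mod (int b - 1) ^ e"
      using assms(4) by blast
    then have "[int h = int c] (mod int ((b - 1) ^ e))"
      by (simp only: cong_def q)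
    with h(1) show ?thesis
      unfolding cong_int_iff by blast
  qed
  then show "\<exists>l > N. happy e b l \<and> happy e b (l + x)"
    using happy_pair_ge [OF assms(2) _ \<open>0 < x\<close>] assms(1) by (simp add: Suc_le_eq)
qed

end
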